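(* Let $M$ be a matroid of rank $n$ on $[d]$. Then, as subsets of $\mathbb{C}^{nd}$, \[ V_{\mathcal{C}(M)} \;=\; V_M \;\cup \bigcup_{N\in \min(M)} V_{\mathcal{C}(N)} . \]
   Context: A matroid $N$ on $[d]=\{1,\dots,d\}$ is determined by its family $\mathcal{D}(N)$ of dependent sets; $\mathcal{C}(N)$ denotes its circuits (minimal dependent sets). Dependency order: for matroids $N_1,N_2$ on $[d]$, $N_1\le N_2$ iff $\mathcal{D}(N_1)\subseteq\mathcal{D}(N_2)$, and $N_1<N_2$ iff moreover $N_1\ne N_2$. For a matroid $M$ on $[d]$, $\min(M)$ denotes the set of minimal elements (for the dependency order) of the set of all matroids $N$ on $[d]$ with $N>M$ (every such $N$ has rank at most $n$). For a matroid $N$ on $[d]$ of rank at most $n$: a realization of $N$ is a tuple $\gamma=(\gamma_1,\dots,\gamma_d)\in(\mathbb{C}^n)^d\cong\mathbb{C}^{nd}$ such that for every $S\subseteq[d]$ the family $(\gamma_s)_{s\in S}$ is linearly dependent iff $S\in\mathcal{D}(N)$; $\Gamma_N$ is the set of realizations and the matroid variety $V_N$ is the Zariski closure of $\Gamma_N$ in $\mathbb{C}^{nd}$. The circuit variety $V_{\mathcal{C}(N)}$ is the set of all $\gamma\in(\mathbb{C}^n)^d$ such that $(\gamma_s)_{s\in S}$ is linearly dependent for every $S\in\mathcal{D}(N)$. *)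

theory Defs
  imports "HOL-Analysis.Analysis"
begin

text \<open>A matroid on [d] = {1..d} is represented by its family of dependent sets.
  The family D is a matroid iff its complement in Pow [d] (the independent sets)
  satisfies the usual independence axioms.\<close>

definition ground :: "nat \<Rightarrow> nat set" where
  "ground d = {1..d}"

definition indep_sets :: "nat \<Rightarrow> nat set set \<Rightarrow> nat set set" where
  "indep_sets d D = Pow (ground d) - D"

definition is_matroid :: "nat \<Rightarrow> nat set set \<Rightarrow> bool" where
  "is_matroid d D \<longleftrightarrow>
     D \<subseteq> Pow (ground d) \<and>
     {} \<in> indep_sets d D \<and>
     (\<forall>I J. I \<in> indep_sets d D \<longrightarrow> J \<subseteq> I \<longrightarrow> J \<in> indep_sets d D) \<and>
     (\<forall>I J. I \<in> indep_sets d D \<longrightarrow> J \<in> indep_sets d D \<longrightarrow> card I < card J \<longrightarrow>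
        (\<exists>x\<in>J - I. insert x I \<in> indep_sets d D))"

definition matroid_rank :: "nat \<Rightarrow> nat set set \<Rightarrow> nat" where
  "matroid_rank d D = Max (card ` indep_sets d D)"

definition circuits :: "nat set set \<Rightarrow> nat set set" where
  "circuits D = {C \<in> D. \<forall>C' \<in> D. C' \<subseteq> C \<longrightarrow> C' = C}"

definition min_above :: "nat \<Rightarrow> nat set set \<Rightarrow> nat set set set" where
  "min_above d M =
     {N. is_matroid d N \<and> M \<subset> N \<and>
         \<not> (\<exists>N'. is_matroid d N' \<and> M \<subset> N' \<and> N' \<subset> N)}"

text \<open>Ambient space (C^n)^d \<cong> C^{nd}: tuples indexed by [d], vectors in complex^'n,
  with the (irrelevant) entries outside [d] fixed to 0.\<close>
definition ambient :: "nat \<Rightarrow> (nat \<Rightarrow> complex^'n) set" where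
  "ambient d = {\<gamma>. \<forall>s. s \<notin> ground d \<longrightarrow> \<gamma> s = 0}"

definition lin_dep_family :: "(nat \<Rightarrow> complex^'n) \<Rightarrow> nat set \<Rightarrow> bool" where
  "lin_dep_family \<gamma> S \<longleftrightarrow>
     (\<exists>c :: nat \<Rightarrow> complex. (\<exists>s\<in>S. c s \<noteq> 0) \<and> (\<Sum>s\<in>S. c s *s \<gamma> s) = 0)"

inductive_set poly_funs :: "nat \<Rightarrow> ((nat \<Rightarrow> complex^'n) \<Rightarrow> complex) set" for d where
  pconst: "(\<lambda>_. c) \<in> poly_funs d"
| pcoord: "s \<in> ground d \<Longrightarrow> (\<lambda>\<gamma>. \<gamma> s $ i) \<in> poly_funs d"
| padd: "p \<in> poly_funs d \<Longrightarrow> q \<in> poly_funs d \<Longrightarrow> (\<lambda>\<gamma>. p \<gamma> + q \<gamma>) \<in> poly_funs d"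
| pmult: "p \<in> poly_funs d \<Longrightarrow> q \<in> poly_funs d \<Longrightarrow> (\<lambda>\<gamma>. p \<gamma> * q \<gamma>) \<in> poly_funs d"

definition zariski_closure :: "nat \<Rightarrow> (nat \<Rightarrow> complex^'n) set \<Rightarrow> (nat \<Rightarrow> complex^'n) set" where
  "zariski_closure d S =
     {x \<in> ambient d. \<forall>p \<in> poly_funs d. (\<forall>y\<in>S. p y = 0) \<longrightarrow> p x = 0}"

definition realizations :: "nat \<Rightarrow> nat set set \<Rightarrow> (nat \<Rightarrow> complex^'n) set" where
  "realizations d N =
     {\<gamma> \<in> ambient d. \<forall>S \<subseteq> ground d. lin_dep_family \<gamma> S \<longleftrightarrow> S \<in> N}"

definition matroid_variety :: "nat \<Rightarrow> nat set set \<Rightarrow> (nat \<Rightarrow> complex^'n) set" where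
  "matroid_variety d N = zariski_closure d (realizations d N)"

text \<open>Circuit variety V_{C(N)}: all S \<in> D(N) dependent (as in the paper's definition).\<close>
definition circuit_variety :: "nat \<Rightarrow> nat set set \<Rightarrow> (nat \<Rightarrow> complex^'n) set" where
  "circuit_variety d N = {\<gamma> \<in> ambient d. \<forall>S \<in> N. lin_dep_family \<gamma> S}"

end

theory Submission
  imports Defs
begin

text \<open>Dependence of a fixed family (\<gamma>_s)_{s \<in> S} is a Zariski-closed condition: if it fails
  at x, complete the vectors x_s to a basis of \<complex>^n by constant vectors; the determinant of the
  \<gamma>_s together with these constant columns is a polynomial in \<gamma> that vanishes whenever
  (\<gamma>_s)_{s \<in> S} is dependent but not at x. Hence V_M \<subseteq> V_C(M), and V_C(N) \<subseteq> V_C(M) is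
  clear for N > M.

  Conversely, a point \<gamma> of V_C(M) realizes the matroid N \<ge> M of its own dependencies. Either
  N = M, so \<gamma> \<in> \<Gamma>_M \<subseteq> V_M, or, there being only finitely many matroids on [d], some element
  of min(M) lies below N, and its circuit variety contains \<gamma>.\<close>

definition matroid_of_vectors :: "nat \<Rightarrow> (nat \<Rightarrow> complex^'n) \<Rightarrow> nat set set" where
  "matroid_of_vectors d \<gamma> = {S. S \<subseteq> ground d \<and> lin_dep_family \<gamma> S}"

lemma finite_ground [simp]: "finite (ground d)"
  by (simp add: ground_def)

lemma lin_dep_family_mono:
  assumes "J \<subseteq> I" "finite I" "lin_dep_family \<gamma> J"
  shows "lin_dep_family \<gamma> I"
proof -
  obtain c s0 where c: "s0 \<in> J" "c s0 \<noteq> 0" "(\<Sum>s\<in>J. c s *s \<gamma> s) = 0"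
    using assms(3) unfolding lin_dep_family_def by blast
  define c' where "c' = (\<lambda>u. if u \<in> J then c u else 0)"
  have "(\<Sum>s\<in>I. c' s *s \<gamma> s) = (\<Sum>s\<in>J. c' s *s \<gamma> s)"
    by (rule sum.mono_neutral_right) (use assms(1,2) in \<open>auto simp: c'_def\<close>)
  also have "\<dots> = 0"
    using c(3) by (simp add: c'_def)
  finally have "(\<Sum>s\<in>I. c' s *s \<gamma> s) = 0" .
  moreover have "s0 \<in> I" "c' s0 \<noteq> 0"
    using c(1,2) assms(1) by (auto simp: c'_def)
  ultimately show ?thesis
    unfolding lin_dep_family_def by blast
qed

lemma inj_on_if_not_lin_dep_family:
  assumes "finite S" "\<not> lin_dep_family \<gamma> S"
  shows "inj_on \<gamma> S"
proof (rule inj_onI, rule ccontr)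
  fix s t
  assume st: "s \<in> S" "t \<in> S" "\<gamma> s = \<gamma> t" "s \<noteq> t"
  define c where "c = (\<lambda>u. if u = s then 1 else if u = t then -1 else (0::complex))"
  have "(\<Sum>u\<in>S. c u *s \<gamma> u) = (\<Sum>u\<in>{s,t}. c u *s \<gamma> u)"
    by (rule sum.mono_neutral_right) (use assms(1) st in \<open>auto simp: c_def\<close>)
  also have "\<dots> = 0"
    using st by (simp add: c_def)
  finally have "lin_dep_family \<gamma> S"
    unfolding lin_dep_family_def using st(1) by (intro exI[of _ c] conjI bexI[of _ s]) (auto simp: c_def)
  with assms(2) show False by simp
qed

lemma independent_image_if_not_lin_dep_family:
  assumes "finite S" "\<not> lin_dep_family \<gamma> S"
  shows "vec.independent (\<gamma> ` S)"
  unfolding vec.independent_explicit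
proof (intro conjI allI impI ballI)
  show "finite (\<gamma> ` S)"
    using assms(1) by simp
  fix c v
  assume sum: "(\<Sum>v\<in>\<gamma> ` S. c v *s v) = 0" and v: "v \<in> \<gamma> ` S"
  have "(\<Sum>s\<in>S. c (\<gamma> s) *s \<gamma> s) = 0"
    using sum sum.reindex[OF inj_on_if_not_lin_dep_family[OF assms], of "\<lambda>v. c v *s v"] by simp
  then have "\<forall>s\<in>S. c (\<gamma> s) = 0"
    using assms(2) unfolding lin_dep_family_def
    by (auto dest: spec[of _ "\<lambda>s. c (\<gamma> s)"])
  then show "c v = 0"
    using v by auto
qed

lemma lin_dep_family_insert_in_span:
  assumes "finite I" "x \<notin> I" "\<not> lin_dep_family \<gamma> I" "lin_dep_family \<gamma> (insert x I)"
  shows "\<gamma> x \<in> vec.span (\<gamma> ` I)"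
proof -
  obtain c s0 where c: "s0 \<in> insert x I" "c s0 \<noteq> 0" "(\<Sum>s\<in>insert x I. c s *s \<gamma> s) = 0"
    using assms(4) unfolding lin_dep_family_def by blast
  have sum: "(\<Sum>s\<in>I. c s *s \<gamma> s) = - (c x *s \<gamma> x)"
    using c(3) assms(1,2) by (simp add: eq_neg_iff_add_eq_0 add.commute)
  have "c x \<noteq> 0"
  proof
    assume "c x = 0"
    then have "lin_dep_family \<gamma> I"
      unfolding lin_dep_family_def using c(1,2) sum by auto
    with assms(3) show False by simp
  qed
  then have "\<gamma> x = (- inverse (c x)) *s (\<Sum>s\<in>I. c s *s \<gamma> s)"
    using sum by (simp add: vec_eq_iff)
  also have "\<dots> \<in> vec.span (\<gamma> ` I)"
    by (intro vec.span_scale vec.span_sum vec.span_base) auto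
  finally show ?thesis .
qed

lemma is_matroid_matroid_of_vectors: "is_matroid d (matroid_of_vectors d \<gamma>)"
  unfolding is_matroid_def indep_sets_def matroid_of_vectors_def
proof (intro conjI allI impI)
  let ?N = "{S. S \<subseteq> ground d \<and> lin_dep_family \<gamma> S}"
  show "?N \<subseteq> Pow (ground d)" "{} \<in> Pow (ground d) - ?N"
    by (auto simp: lin_dep_family_def)
  fix I J
  assume I: "I \<in> Pow (ground d) - ?N"
  then have finI: "finite I" and ndI: "\<not> lin_dep_family \<gamma> I"
    by (auto intro: finite_subset[OF _ finite_ground])
  show "J \<in> Pow (ground d) - ?N" if "J \<subseteq> I"
    using I that lin_dep_family_mono[OF that finI] by auto
  assume J: "J \<in> Pow (ground d) - ?N" and lt: "card I < card J"
  then have finJ: "finite J" and ndJ: "\<not> lin_dep_family \<gamma> J"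
    by (auto intro: finite_subset[OF _ finite_ground])
  show "\<exists>x\<in>J - I. insert x I \<in> Pow (ground d) - ?N"
  proof (rule ccontr)
    assume "\<not> ?thesis"
    then have "\<gamma> x \<in> vec.span (\<gamma> ` I)" if "x \<in> J" for x
      using that I J lin_dep_family_insert_in_span[OF finI _ ndI, of x]
      by (cases "x \<in> I") (auto intro: vec.span_base)
    then have "card (\<gamma> ` J) \<le> card (\<gamma> ` I)"
      using vec.independent_span_bound[OF _ independent_image_if_not_lin_dep_family[OF finJ ndJ]]
        finI by blast
    then show False
      using lt card_image[OF inj_on_if_not_lin_dep_family[OF finI ndI]]
        card_image[OF inj_on_if_not_lin_dep_family[OF finJ ndJ]] by simp
  qed
qed

lemma realization_matroid_of_vectors:
  "\<gamma> \<in> ambient d \<Longrightarrow> \<gamma> \<in> realizations d (matroid_of_vectors d \<gamma>)"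
  by (auto simp: realizations_def matroid_of_vectors_def)

lemma circuit_variety_iff_subset_matroid_of_vectors:
  assumes "N \<subseteq> Pow (ground d)"
  shows "\<gamma> \<in> circuit_variety d N \<longleftrightarrow> \<gamma> \<in> ambient d \<and> N \<subseteq> matroid_of_vectors d \<gamma>"
  using assms by (auto simp: circuit_variety_def matroid_of_vectors_def)

lemma circuit_variety_antimono: "M \<subseteq> N \<Longrightarrow> circuit_variety d N \<subseteq> circuit_variety d M"
  by (auto simp: circuit_variety_def)

lemma poly_funs_sum:
  "finite A \<Longrightarrow> (\<And>a. a \<in> A \<Longrightarrow> f a \<in> poly_funs d) \<Longrightarrow> (\<lambda>\<gamma>. \<Sum>a\<in>A. f a \<gamma>) \<in> poly_funs d"
  by (induction A rule: finite_induct) (auto intro: poly_funs.intros)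

lemma poly_funs_prod:
  "finite A \<Longrightarrow> (\<And>a. a \<in> A \<Longrightarrow> f a \<in> poly_funs d) \<Longrightarrow> (\<lambda>\<gamma>. \<Prod>a\<in>A. f a \<gamma>) \<in> poly_funs d"
  by (induction A rule: finite_induct) (auto intro: poly_funs.intros)

lemma poly_funs_det:
  fixes F :: "(nat \<Rightarrow> complex^'n) \<Rightarrow> complex^'m^'m"
  assumes "\<And>r i. (\<lambda>\<gamma>. F \<gamma> $ r $ i) \<in> poly_funs d"
  shows "(\<lambda>\<gamma>. det (F \<gamma>)) \<in> poly_funs d"
  unfolding det_def
  by (intro poly_funs_sum poly_funs.pmult[OF poly_funs.pconst] poly_funs_prod assms) auto

lemma det_neq_0_iff_columns_independent:
  fixes A :: "'a::field^'n^'n"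
  shows "det A \<noteq> 0 \<longleftrightarrow> (\<forall>c. (\<Sum>i\<in>UNIV. c i *s column i A) = 0 \<longrightarrow> (\<forall>i. c i = 0))"
  by (simp add: invertible_det_nz[symmetric] invertible_left_inverse
      matrix_left_invertible_independent_columns)

lemma det_eq_0_if_lin_dep_columns:
  fixes A :: "complex^'n^'n"
  assumes \<iota>: "bij_betw \<iota> I S" and cols: "\<And>i. i \<in> I \<Longrightarrow> column i A = \<gamma> (\<iota> i)"
    and dep: "lin_dep_family \<gamma> S"
  shows "det A = 0"
proof -
  obtain c s0 where c: "s0 \<in> S" "c s0 \<noteq> 0" "(\<Sum>s\<in>S. c s *s \<gamma> s) = 0"
    using dep unfolding lin_dep_family_def by blast
  define w where "w i = (if i \<in> I then c (\<iota> i) else 0)" for i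
  have "(\<Sum>i\<in>UNIV. w i *s column i A) = (\<Sum>i\<in>I. c (\<iota> i) *s \<gamma> (\<iota> i))"
    by (rule sum.mono_neutral_cong_right) (auto simp: w_def cols)
  also have "\<dots> = (\<Sum>s\<in>S. c s *s \<gamma> s)"
    using sum.reindex_bij_betw[OF \<iota>, of "\<lambda>s. c s *s \<gamma> s"] .
  finally have "(\<Sum>i\<in>UNIV. w i *s column i A) = 0"
    using c(3) by simp
  moreover obtain i0 where "i0 \<in> I" "\<iota> i0 = s0"
    using \<iota> c(1) by (auto simp: bij_betw_def)
  then have "w i0 \<noteq> 0"
    using c(2) by (simp add: w_def)
  ultimately show ?thesis
    using det_neq_0_iff_columns_independent[of A] by blast
qed

lemma det_neq_0_if_columns_independent:
  fixes A :: "'a::field^'n^'n"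
  assumes inj: "inj (\<lambda>i. column i A)" and indep: "vec.independent (columns A)"
  shows "det A \<noteq> 0"
  unfolding det_neq_0_iff_columns_independent
proof (intro allI impI)
  fix c i
  assume "(\<Sum>i\<in>UNIV. c i *s column i A) = 0"
  then have "(\<Sum>v\<in>columns A. c (inv (\<lambda>i. column i A) v) *s v) = 0"
    using sum.reindex[OF inj, of "\<lambda>v. c (inv (\<lambda>i. column i A) v) *s v"]
    by (simp add: columns_def full_SetCompr_eq inv_f_f[OF inj])
  then have "c (inv (\<lambda>i. column i A) (column i A)) = 0"
    by (rule conjunct2[OF indep[unfolded vec.independent_explicit], rule_format])
      (auto simp: columns_def)
  then show "c i = 0"
    by (simp add: inv_f_f[OF inj])
qed

lemma basis_enumeration_extending:
  fixes X :: "('a::field^'n) set"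
  assumes "vec.independent X"
  obtains \<sigma> :: "'n \<Rightarrow> 'a^'n" where "inj \<sigma>" "vec.independent (range \<sigma>)" "X \<subseteq> range \<sigma>"
proof -
  obtain B where B: "X \<subseteq> B" "vec.independent B" "UNIV \<subseteq> vec.span B"
    using vec.maximal_independent_subset_extend[OF _ assms, of UNIV] by auto
  have "card B = CARD('n)" "finite B"
    using vec.basis_card_eq_dim[of B UNIV] B vec_dim_card vec.finiteI_independent by auto
  then obtain \<sigma> where "bij_betw \<sigma> (UNIV::'n set) B"
    using finite_same_card_bij[of "UNIV::'n set" B] by auto
  with B show ?thesis
    by (intro that[of \<sigma>]) (auto simp: bij_betw_def)
qed

lemma poly_vanishing_on_lin_dep_family:
  fixes x :: "nat \<Rightarrow> complex^'n"
  assumes S: "S \<subseteq> ground d" and nd: "\<not> lin_dep_family x S"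
  shows "\<exists>p\<in>poly_funs d. (\<forall>\<gamma>::nat \<Rightarrow> complex^'n. lin_dep_family \<gamma> S \<longrightarrow> p \<gamma> = 0) \<and> p x \<noteq> 0"
proof -
  have finS: "finite S"
    using S by (rule finite_subset) simp
  obtain \<sigma> :: "'n \<Rightarrow> complex^'n" where \<sigma>: "inj \<sigma>" "vec.independent (range \<sigma>)" "x ` S \<subseteq> range \<sigma>"
    by (rule basis_enumeration_extending[OF independent_image_if_not_lin_dep_family[OF finS nd]])
  define I where "I = \<sigma> -` x ` S"
  define \<iota> where "\<iota> i = inv_into S x (\<sigma> i)" for i
  text \<open>The columns indexed by \<open>I\<close> carry the variable vectors \<open>\<gamma>\<^sub>s\<close>, the others the
    constant vectors completing \<open>x ` S\<close> to the basis \<open>range \<sigma>\<close>.\<close>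
  define A where "A \<gamma> = (\<chi> r i. (if i \<in> I then \<gamma> (\<iota> i) else \<sigma> i) $ r)" for \<gamma> :: "nat \<Rightarrow> complex^'n"
  have column_A: "column i (A \<gamma>) = (if i \<in> I then \<gamma> (\<iota> i) else \<sigma> i)" for \<gamma> i
    by (simp add: column_def A_def vec_eq_iff)
  have bij_x: "bij_betw x S (x ` S)"
    using inj_on_if_not_lin_dep_family[OF finS nd] by (simp add: bij_betw_def)
  have "bij_betw \<sigma> I (x ` S)"
    using \<sigma>(1,3) by (auto simp: I_def bij_betw_def inj_on_def)
  from bij_betw_trans[OF this bij_betw_inv_into[OF bij_x]]
  have \<iota>: "bij_betw \<iota> I S"
    by (simp add: \<iota>_def[abs_def] comp_def)
  have "(\<lambda>\<gamma>. det (A \<gamma>)) \<in> poly_funs d"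
  proof (rule poly_funs_det)
    fix r i
    show "(\<lambda>\<gamma>. A \<gamma> $ r $ i) \<in> poly_funs d"
    proof (cases "i \<in> I")
      case True
      then show ?thesis
        using \<iota> S poly_funs.pcoord[of "\<iota> i" d r] by (auto simp: A_def bij_betw_def)
    qed (simp add: A_def poly_funs.pconst)
  qed
  moreover have "det (A \<gamma>) = 0" if "lin_dep_family \<gamma> S" for \<gamma>
    using det_eq_0_if_lin_dep_columns[OF \<iota> _ that] by (simp add: column_A)
  moreover have "det (A x) \<noteq> 0"
  proof (rule det_neq_0_if_columns_independent)
    have "column i (A x) = \<sigma> i" for i
      by (simp add: column_A \<iota>_def I_def f_inv_into_f)
    then show "inj (\<lambda>i. column i (A x))" "vec.independent (columns (A x))"
      using \<sigma>(1,2) by (simp_all add: columns_def full_SetCompr_eq)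
  qed
  ultimately show ?thesis
    by (intro bexI[of _ "\<lambda>\<gamma>. det (A \<gamma>)"]) auto
qed

lemma lin_dep_family_zariski_closure:
  assumes S: "S \<subseteq> ground d" and Y: "\<And>y. y \<in> Y \<Longrightarrow> lin_dep_family y S"
    and x: "x \<in> zariski_closure d Y"
  shows "lin_dep_family x S"
proof (rule ccontr)
  assume "\<not> lin_dep_family x S"
  then obtain p where p: "p \<in> poly_funs d" "\<forall>\<gamma>. lin_dep_family \<gamma> S \<longrightarrow> p \<gamma> = 0" "p x \<noteq> 0"
    using poly_vanishing_on_lin_dep_family[OF S] by blast
  have "\<forall>y\<in>Y. p y = 0"
    using Y p(2) by blast
  then have "p x = 0"
    using x p(1) by (simp add: zariski_closure_def)
  with p(3) show False ..
qed

lemma matroid_variety_subset_circuit_variety: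
  assumes "M \<subseteq> Pow (ground d)"
  shows "matroid_variety d M \<subseteq> circuit_variety d M"
proof
  fix x :: "nat \<Rightarrow> complex^'n"
  assume x: "x \<in> matroid_variety d M"
  have "lin_dep_family x S" if "S \<in> M" for S
  proof (rule lin_dep_family_zariski_closure)
    show S: "S \<subseteq> ground d"
      using assms that by blast
    show "lin_dep_family y S" if "y \<in> realizations d M" for y
      using that S \<open>S \<in> M\<close> by (simp add: realizations_def)
    show "x \<in> zariski_closure d (realizations d M)"
      using x by (simp add: matroid_variety_def)
  qed
  then show "x \<in> circuit_variety d M"
    using x by (simp add: circuit_variety_def matroid_variety_def zariski_closure_def)
qed

lemma realizations_subset_matroid_variety: "realizations d M \<subseteq> matroid_variety d M"
  by (auto simp: matroid_variety_def zariski_closure_def realizations_def)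

lemma is_matroid_subset_Pow: "is_matroid d M \<Longrightarrow> M \<subseteq> Pow (ground d)"
  by (simp add: is_matroid_def)

lemma min_above_psupset: "N \<in> min_above d M \<Longrightarrow> M \<subset> N"
  by (simp add: min_above_def)

lemma min_above_below:
  assumes "is_matroid d N" "M \<subset> N"
  obtains N' where "N' \<in> min_above d M" "N' \<subseteq> N"
proof -
  let ?A = "{N'. is_matroid d N' \<and> M \<subset> N' \<and> N' \<subseteq> N}"
  have "?A \<subseteq> Pow (Pow (ground d))"
    using is_matroid_subset_Pow[OF assms(1)] by blast
  then have "finite ?A"
    by (rule finite_subset) simp
  moreover have "?A \<noteq> {}"
    using assms by blast
  ultimately obtain N' where N': "N' \<in> ?A" and minimal: "\<forall>N''\<in>?A. N'' \<le> N' \<longrightarrow> N' = N''"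
    by (rule finite_has_minimal[THEN bexE])
  have "\<not> (is_matroid d N'' \<and> M \<subset> N'' \<and> N'' \<subset> N')" for N''
  proof
    assume N'': "is_matroid d N'' \<and> M \<subset> N'' \<and> N'' \<subset> N'"
    then have "N'' \<in> ?A"
      using N' by auto
    with N'' show False
      using minimal by auto
  qed
  with N' have "N' \<in> min_above d M"
    by (simp add: min_above_def)
  with N' show ?thesis
    using that by simp
qed

lemma circuit_variety_subset_matroid_variety_Un_min_above:
  assumes M: "M \<subseteq> Pow (ground d)"
  shows "circuit_variety d M \<subseteq> matroid_variety d M \<union> (\<Union>N \<in> min_above d M. circuit_variety d N)"
proof
  fix \<gamma>
  assume "\<gamma> \<in> circuit_variety d M"
  then have \<gamma>: "\<gamma> \<in> ambient d" "M \<subseteq> matroid_of_vectors d \<gamma>"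
    using circuit_variety_iff_subset_matroid_of_vectors[OF M] by auto
  show "\<gamma> \<in> matroid_variety d M \<union> (\<Union>N \<in> min_above d M. circuit_variety d N)"
  proof (cases "matroid_of_vectors d \<gamma> = M")
    case True
    then show ?thesis
      using realization_matroid_of_vectors[OF \<gamma>(1)] realizations_subset_matroid_variety by auto
  next
    case False
    then obtain N where "N \<in> min_above d M" "N \<subseteq> matroid_of_vectors d \<gamma>"
      using min_above_below[OF is_matroid_matroid_of_vectors] \<gamma>(2) by blast
    then show ?thesis
      using circuit_variety_iff_subset_matroid_of_vectors[of N d \<gamma>] \<gamma>(1)
      by (auto simp: matroid_of_vectors_def)
  qed
qed

theorem mainTheorem1:
  fixes d :: nat and M :: "nat set set"
  assumes "is_matroid d M"
    and "matroid_rank d M = CARD('n::finite)"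
  shows "(circuit_variety d M :: (nat \<Rightarrow> complex^'n) set) =
         matroid_variety d M \<union> (\<Union>N \<in> min_above d M. circuit_variety d N)"
proof (intro equalityI subsetI)
  have M: "M \<subseteq> Pow (ground d)"
    using assms(1) by (rule is_matroid_subset_Pow)
  show "\<gamma> \<in> matroid_variety d M \<union> (\<Union>N \<in> min_above d M. circuit_variety d N)"
    if "\<gamma> \<in> circuit_variety d M" for \<gamma> :: "nat \<Rightarrow> complex^'n"
    using that circuit_variety_subset_matroid_variety_Un_min_above[OF M] by blast
  show "\<gamma> \<in> circuit_variety d M"
    if "\<gamma> \<in> matroid_variety d M \<union> (\<Union>N \<in> min_above d M. circuit_variety d N)"
    for \<gamma> :: "nat \<Rightarrow> complex^'n"
    using that
  proof
    assume "\<gamma> \<in> matroid_variety d M"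
    then show ?thesis
      using matroid_variety_subset_circuit_variety[OF M] by blast
  next
    assume "\<gamma> \<in> (\<Union>N \<in> min_above d M. circuit_variety d N)"
    then obtain N where "N \<in> min_above d M" "\<gamma> \<in> circuit_variety d N"
      by blast
    then show ?thesis
      using circuit_variety_antimono[of M N d] min_above_psupset by blast
  qed
qed

end
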